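(* Let $\lambda^1,\dots,\lambda^M$ be loss functions such that each $\lambda^m$ is proper and $\eta^m$-mixable for some $\eta^m>0$. Consider the multiobjective game with $N$ experts: $L_0^{(m)}:=0$, $L_0^{n,m}:=0$; at each step $t=1,2,\dots$, each Expert $n$ announces $\gamma_t^n\in[0,1]$, Learner announces $\pi_t\in[0,1]$, Reality announces $\omega_t\in\{0,1\}$, and $L_t^{(m)}:=L_{t-1}^{(m)}+\lambda^m(\pi_t,\omega_t)$, $L_t^{n,m}:=L_{t-1}^{n,m}+\lambda^m(\gamma_t^n,\omega_t)$ for all $n,m$. If Learner follows the defensive forecasting algorithm (described in the context), then for all $t$, all $n=1,\dots,N$ and all $m=1,\dots,M$, $$L_t^{(m)}\le L_t^{n,m}+\frac{\ln(MN)}{\eta^m}.$$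
   Context: A loss function is a map $\lambda:[0,1]\times\{0,1\}\to[0,\infty]$ satisfying: (1) $\lambda(\gamma,0)$, $\lambda(\gamma,1)$ continuous in $\gamma\in[0,1]$ (standard topology on $[0,\infty]$); (2) some $\gamma$ has both values finite; (3) no $\gamma$ has both values infinite. Superprediction set: $\Sigma_\lambda=\{(x,y)\in[0,\infty)^2:\exists\gamma\ \lambda(\gamma,0)\le x,\ \lambda(\gamma,1)\le y\}$. $\lambda$ is $\eta$-mixable ($\eta>0$) if $\{(e^{-\eta x},e^{-\eta y}):(x,y)\in\Sigma_\lambda\}$ is convex; proper if $\pi\lambda(\pi,1)+(1-\pi)\lambda(\pi,0)\le\pi\lambda(\pi',1)+(1-\pi)\lambda(\pi',0)$ for all $\pi,\pi'\in[0,1]$. Defensive forecasting algorithm (in this setting): for each pair $(n,m)$ define, after step $t$, $Q^{n,m}_t:=\prod_{s=1}^t\exp\bigl(\eta^m(\lambda^m(\pi_s,\omega_s)-\lambda^m(\gamma_s^n,\omega_s))\bigr)$ (with $Q^{n,m}_0=1$), and $Q_t:=\frac{1}{MN}\sum_{n,m}Q^{n,m}_t$. At step $t$, after reading $\gamma_t^1,\dots,\gamma_t^N$, let $f_t(\pi,\omega)$ be the value $Q_t$ would take if $\pi_t=\pi$ and $\omega_t=\omega$, minus $Q_{t-1}$ (with $\infty-\infty:=0$). If $f_t(0,1)\le0$ predict $\pi_t:=0$; else if $f_t(1,0)\le0$ predict $\pi_t:=1$; otherwise predict any $\pi_t=\pi$ satisfying $f_t(\pi,0)=f_t(\pi,1)$.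 *)

theory Defs
  imports "HOL-Analysis.Analysis"
begin

(* Outcomes {0,1} are encoded as bool: False = 0, True = 1.
   Loss values in [0,\<infinity>] are encoded as ennreal. *)

type_synonym loss = "real \<Rightarrow> bool \<Rightarrow> ennreal"

definition loss_function :: "loss \<Rightarrow> bool" where
  "loss_function lam \<longleftrightarrow>
     continuous_on {0..1} (\<lambda>g. lam g False) \<and>
     continuous_on {0..1} (\<lambda>g. lam g True) \<and>
     (\<exists>g\<in>{0..1}. lam g False < \<infinity> \<and> lam g True < \<infinity>) \<and>
     \<not> (\<exists>g\<in>{0..1}. lam g False = \<infinity> \<and> lam g True = \<infinity>)"

definition superpred :: "loss \<Rightarrow> (real \<times> real) set" where
  "superpred lam = {(x, y). 0 \<le> x \<and> 0 \<le> y \<and>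
     (\<exists>g\<in>{0..1}. lam g False \<le> ennreal x \<and> lam g True \<le> ennreal y)}"

definition mixable :: "real \<Rightarrow> loss \<Rightarrow> bool" where
  "mixable eta lam \<longleftrightarrow> eta > 0 \<and>
     convex ((\<lambda>(x, y). (exp (- eta * x), exp (- eta * y))) ` superpred lam)"

definition proper_loss :: "loss \<Rightarrow> bool" where
  "proper_loss lam \<longleftrightarrow> (\<forall>p\<in>{0..1}. \<forall>p'\<in>{0..1}.
     ennreal p * lam p True + ennreal (1 - p) * lam p False
       \<le> ennreal p * lam p' True + ennreal (1 - p) * lam p' False)"

text \<open>One factor exp(eta (a - b)) of Q, a = Learner's loss, b = Expert's loss,
  with conventions exp(\<infinity>) = \<infinity>, exp(-\<infinity>) = 0, \<infinity> - \<infinity> = 0.\<close>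
definition dfactor :: "real \<Rightarrow> ennreal \<Rightarrow> ennreal \<Rightarrow> ennreal" where
  "dfactor eta a b =
     (if a = \<infinity> \<and> b = \<infinity> then 1
      else if b = \<infinity> then 0
      else if a = \<infinity> then \<infinity>
      else ennreal (exp (eta * (enn2real a - enn2real b))))"

text \<open>Q^{n,m}_t and Q_t, as functions of the whole play (Learner's predictions prd,
  outcomes om, expert predictions gam t n).\<close>
definition Qnm :: "(nat \<Rightarrow> loss) \<Rightarrow> (nat \<Rightarrow> real) \<Rightarrow> (nat \<Rightarrow> nat \<Rightarrow> real)
    \<Rightarrow> (nat \<Rightarrow> real) \<Rightarrow> (nat \<Rightarrow> bool) \<Rightarrow> nat \<Rightarrow> nat \<Rightarrow> nat \<Rightarrow> ennreal" where
  "Qnm lam eta gam prd om t n m =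
     (\<Prod>s\<in>{1..t}. dfactor (eta m) (lam m (prd s) (om s)) (lam m (gam s n) (om s)))"

definition Qt :: "nat \<Rightarrow> nat \<Rightarrow> (nat \<Rightarrow> loss) \<Rightarrow> (nat \<Rightarrow> real) \<Rightarrow> (nat \<Rightarrow> nat \<Rightarrow> real)
    \<Rightarrow> (nat \<Rightarrow> real) \<Rightarrow> (nat \<Rightarrow> bool) \<Rightarrow> nat \<Rightarrow> ennreal" where
  "Qt M N lam eta gam prd om t =
     ennreal (1 / (real M * real N)) *
       (\<Sum>(n, m)\<in>{1..N} \<times> {1..M}. Qnm lam eta gam prd om t n m)"

definition ediff :: "ennreal \<Rightarrow> ennreal \<Rightarrow> ereal" where
  "ediff a b = (if a = \<infinity> \<and> b = \<infinity> then 0 else enn2ereal a - enn2ereal b)"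

definition ft :: "nat \<Rightarrow> nat \<Rightarrow> (nat \<Rightarrow> loss) \<Rightarrow> (nat \<Rightarrow> real) \<Rightarrow> (nat \<Rightarrow> nat \<Rightarrow> real)
    \<Rightarrow> (nat \<Rightarrow> real) \<Rightarrow> (nat \<Rightarrow> bool) \<Rightarrow> nat \<Rightarrow> real \<Rightarrow> bool \<Rightarrow> ereal" where
  "ft M N lam eta gam prd om t p w =
     ediff (Qt M N lam eta gam (prd(t := p)) (om(t := w)) t) (Qt M N lam eta gam prd om (t - 1))"

definition follows_DF :: "nat \<Rightarrow> nat \<Rightarrow> (nat \<Rightarrow> loss) \<Rightarrow> (nat \<Rightarrow> real)
    \<Rightarrow> (nat \<Rightarrow> nat \<Rightarrow> real) \<Rightarrow> (nat \<Rightarrow> real) \<Rightarrow> (nat \<Rightarrow> bool) \<Rightarrow> bool" where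
  "follows_DF M N lam eta gam prd om \<longleftrightarrow> (\<forall>t\<ge>1.
     prd t \<in> {0..1} \<and>
     (let f = ft M N lam eta gam prd om t in
       if f 0 True \<le> 0 then prd t = 0
       else if f 1 False \<le> 0 then prd t = 1
       else f (prd t) False = f (prd t) True))"

end

theory Submission
  imports Defs
begin

text \<open>
  For a proper \<open>\<eta>\<close>-mixable loss and every prediction \<open>\<pi>\<close>, the \<open>\<pi>\<close>-mixture of the two
  possible factors \<open>exp (\<eta> (\<lambda>(\<pi>,\<omega>) - \<lambda>(\<gamma>,\<omega>)))\<close> is at most 1: move from the exponentiated
  loss point of \<open>\<pi>\<close> towards that of \<open>\<gamma>\<close> inside the convex exponentiated superprediction set;
  by properness the \<open>\<pi>\<close>-expected loss is smallest at the start, so the derivative there is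
  nonpositive, which is exactly the claimed inequality. Hence \<open>Q\<^sub>t\<close> is a \<open>\<pi>\<close>-mixture
  supermartingale for every \<open>\<pi>\<close>, and the defensive choice of \<open>\<pi>\<^sub>t\<close> makes both possible values of
  \<open>Q\<^sub>t\<close> at most \<open>Q\<^sub>t\<^sub>-\<^sub>1\<close>. So \<open>Q\<^sub>t \<le> 1\<close>, each \<open>Q\<^sup>n\<^sup>,\<^sup>m\<^sub>t \<le> MN\<close>, and taking logarithms gives the
  loss bound.
\<close>

lemma loss_function_finite_point:
  assumes "loss_function l"
  obtains g where "g \<in> {0..1}" "l g False < \<infinity>" "l g True < \<infinity>"
  using assms by (auto simp: loss_function_def)

lemma proper_loss_min_at_0:
  assumes "proper_loss l" and "g \<in> {0..1}"
  shows "l 0 False \<le> l g False"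
  using assms unfolding proper_loss_def by (drule_tac x=0 in bspec) auto

lemma proper_loss_min_at_1:
  assumes "proper_loss l" and "g \<in> {0..1}"
  shows "l 1 True \<le> l g True"
  using assms unfolding proper_loss_def by (drule_tac x=1 in bspec) auto

lemma proper_loss_finite_interior:
  assumes lf: "loss_function l" and pr: "proper_loss l" and p: "p \<in> {0<..<1}"
  shows "l p True < \<infinity>" and "l p False < \<infinity>"
proof -
  obtain g where g: "g \<in> {0..1}" "l g False < \<infinity>" "l g True < \<infinity>"
    using lf by (rule loss_function_finite_point)
  have "ennreal p * l p True + ennreal (1 - p) * l p False
          \<le> ennreal p * l g True + ennreal (1 - p) * l g False"
    using pr p g unfolding proper_loss_def by auto
  also have "\<dots> < \<infinity>" using g by (simp add: ennreal_mult_less_top)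
  finally have "ennreal p * l p True < \<infinity>" "ennreal (1 - p) * l p False < \<infinity>"
    by (auto simp: top.not_eq_extremum)
  thus "l p True < \<infinity>" "l p False < \<infinity>" using p by (auto simp: ennreal_mult_less_top)
qed

lemma superpredI:
  assumes "g \<in> {0..1}" "0 \<le> x" "0 \<le> y" "l g False \<le> ennreal x" "l g True \<le> ennreal y"
  shows "(x, y) \<in> superpred l"
  using assms by (auto simp: superpred_def)

lemma proper_expected_loss_le_superpred:
  fixes l :: loss
  assumes pr: "proper_loss l" and p: "p \<in> {0..1}"
    and a0: "l p False = ennreal a0" and a1: "l p True = ennreal a1" and "a0 \<ge> 0" "a1 \<ge> 0"
    and xy: "(x, y) \<in> superpred l"
  shows "p * a1 + (1 - p) * a0 \<le> p * y + (1 - p) * x"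
proof -
  from xy obtain g where xy0: "0 \<le> x" "0 \<le> y" and g: "g \<in> {0..1}"
    and lx: "l g False \<le> ennreal x" and ly: "l g True \<le> ennreal y"
    by (auto simp: superpred_def)
  have "ennreal (p * a1 + (1 - p) * a0) = ennreal p * l p True + ennreal (1 - p) * l p False"
    using p assms by (simp add: ennreal_mult ennreal_plus)
  also have "\<dots> \<le> ennreal p * l g True + ennreal (1 - p) * l g False"
    using pr p g unfolding proper_loss_def by blast
  also have "\<dots> \<le> ennreal p * ennreal y + ennreal (1 - p) * ennreal x"
    by (intro add_mono mult_left_mono lx ly) auto
  also have "\<dots> = ennreal (p * y + (1 - p) * x)"
    using p xy0 by (simp add: ennreal_mult ennreal_plus)
  finally show ?thesis
    using p xy0 by (subst (asm) ennreal_le_iff) auto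
qed

section \<open>The mixability inequality\<close>

lemma DERIV_nonpos_at_right_max:
  fixes h :: "real \<Rightarrow> real"
  assumes der: "DERIV h a :> D" and "a < b" and max: "\<And>t. t \<in> {a..b} \<Longrightarrow> h t \<le> h a"
  shows "D \<le> 0"
proof (rule ccontr)
  assume "\<not> D \<le> 0"
  then obtain d where d: "d > 0" "\<And>k. 0 < k \<Longrightarrow> k < d \<Longrightarrow> h a < h (a + k)"
    using DERIV_pos_inc_right[OF der] by auto
  define k where "k = min (d / 2) (b - a)"
  have "h a < h (a + k)" using d \<open>a < b\<close> by (intro d(2)) (auto simp: k_def)
  moreover have "h (a + k) \<le> h a" using d \<open>a < b\<close> by (intro max) (auto simp: k_def)
  ultimately show False by simp
qed

lemma DERIV_ln_segment_at_0:
  fixes w z :: real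
  assumes "w > 0"
  shows "DERIV (\<lambda>t. ln ((1 - t) * w + t * z)) 0 :> (z - w) / w"
proof -
  have "DERIV (\<lambda>t. (1 - t) * w + t * z) 0 :> z - w"
    by (auto intro!: derivative_eq_intros)
  from DERIV_chain2[OF DERIV_ln_divide this] assms show ?thesis by simp
qed

lemma mixable_proper_exp_mixture_le_1:
  fixes l :: loss
  assumes pr: "proper_loss l" and mx: "mixable eta l"
    and p: "p \<in> {0..1}" and g: "g \<in> {0..1}"
    and a0: "l p False = ennreal a0" and a1: "l p True = ennreal a1"
    and b0: "l g False = ennreal b0" and b1: "l g True = ennreal b1"
    and nn: "a0 \<ge> 0" "a1 \<ge> 0" "b0 \<ge> 0" "b1 \<ge> 0"
  shows "p * exp (eta * (a1 - b1)) + (1 - p) * exp (eta * (a0 - b0)) \<le> 1"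
proof -
  have eta: "eta > 0" using mx by (simp add: mixable_def)
  define F where "F = (\<lambda>(x::real, y::real). (exp (- eta * x), exp (- eta * y)))"
  have cv: "convex (F ` superpred l)" using mx by (simp add: mixable_def F_def)
  define u0 u1 v0 v1 where "u0 = exp (- eta * a0)" and "u1 = exp (- eta * a1)"
    and "v0 = exp (- eta * b0)" and "v1 = exp (- eta * b1)"
  have pos: "u0 > 0" "u1 > 0" by (auto simp: u0_def u1_def)
  have U: "(u0, u1) \<in> F ` superpred l"
    unfolding F_def u0_def u1_def using p a0 a1 nn
    by (intro image_eqI[where x="(a0, a1)"] superpredI) auto
  have V: "(v0, v1) \<in> F ` superpred l"
    unfolding F_def v0_def v1_def using g b0 b1 nn
    by (intro image_eqI[where x="(b0, b1)"] superpredI) auto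
  define h where "h t = p * ln ((1 - t) * u1 + t * v1) + (1 - p) * ln ((1 - t) * u0 + t * v0)"
    for t
  have h_max: "h t \<le> h 0" if t: "t \<in> {0..1}" for t
  proof -
    have "(1 - t) *\<^sub>R (u0, u1) + t *\<^sub>R (v0, v1) \<in> F ` superpred l"
      using t by (intro convexD[OF cv U V]) auto
    then obtain x y where xy: "(x, y) \<in> superpred l"
      and e0: "exp (- eta * x) = (1 - t) * u0 + t * v0"
      and e1: "exp (- eta * y) = (1 - t) * u1 + t * v1"
      by (auto simp: F_def)
    have "h t = - eta * (p * y + (1 - p) * x)"
      unfolding h_def e0[symmetric] e1[symmetric] by (simp add: algebra_simps)
    also have "\<dots> \<le> - eta * (p * a1 + (1 - p) * a0)"
      using proper_expected_loss_le_superpred[OF pr p a0 a1 nn(1,2) xy] eta by simp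
    also have "\<dots> = h 0"
      unfolding h_def u0_def u1_def by (simp add: algebra_simps)
    finally show ?thesis .
  qed
  define D where "D = p * ((v1 - u1) / u1) + (1 - p) * ((v0 - u0) / u0)"
  have der: "DERIV h 0 :> D"
    unfolding h_def[abs_def] D_def by (intro DERIV_add DERIV_cmult DERIV_ln_segment_at_0 pos)
  have "D \<le> 0" using h_max by (intro DERIV_nonpos_at_right_max[OF der, of 1]) auto
  hence "p * (v1 / u1) + (1 - p) * (v0 / u0) \<le> 1"
    using pos unfolding D_def by (simp add: diff_divide_distrib algebra_simps)
  moreover have "v1 / u1 = exp (eta * (a1 - b1))" "v0 / u0 = exp (eta * (a0 - b0))"
    by (simp_all add: u0_def u1_def v0_def v1_def exp_diff[symmetric] algebra_simps)
  ultimately show ?thesis by simp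
qed

lemma mult_exp_le_1_iff:
  fixes q eta a b :: real
  assumes "q > 0" "eta > 0"
  shows "q * exp (eta * (a - b)) \<le> 1 \<longleftrightarrow> a + ln q / eta \<le> b"
proof -
  have "q * exp (eta * (a - b)) = exp (ln q + eta * (a - b))"
    using assms by (simp add: exp_add)
  also have "\<dots> \<le> 1 \<longleftrightarrow> ln q + eta * (a - b) \<le> 0" by simp
  also have "\<dots> \<longleftrightarrow> a + ln q / eta \<le> b" using assms by (simp add: field_simps)
  finally show ?thesis .
qed

lemma continuous_on_closed_interval_ge:
  fixes f :: "real \<Rightarrow> 'a::linorder_topology"
  assumes "continuous_on {0..1} f" and "\<And>g. g \<in> {0<..<1} \<Longrightarrow> c \<le> f g" and "g \<in> {0..1}"
  shows "c \<le> f g"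
proof -
  have "closure {0<..<(1::real)} \<subseteq> {0..1} \<inter> f -` {c..}"
    using assms by (intro closure_minimal continuous_closed_preimage) auto
  thus ?thesis using assms(3) by auto
qed

text \<open>Each summand of the mixture bound is at most 1 on its own, which bounds the losses of
  interior \<open>\<gamma>\<close> from below; continuity carries the bound to the endpoints, where the losses may
  be infinite and the mixture bound is unavailable.\<close>

lemma mixable_proper_loss_lower_bound:
  fixes l :: loss
  assumes lf: "loss_function l" and pr: "proper_loss l" and mx: "mixable eta l"
    and p: "p \<in> {0<..<1}"
    and a0: "l p False = ennreal a0" and a1: "l p True = ennreal a1" and nn: "a0 \<ge> 0" "a1 \<ge> 0"
    and g: "g \<in> {0..1}"
  shows "ennreal (a0 + ln (1 - p) / eta) \<le> l g False"
    and "ennreal (a1 + ln p / eta) \<le> l g True"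
proof -
  have eta: "eta > 0" using mx by (simp add: mixable_def)
  have pp: "0 < p" "0 < 1 - p" using p by auto
  have interior: "ennreal (a0 + ln (1 - p) / eta) \<le> l g' False
                  \<and> ennreal (a1 + ln p / eta) \<le> l g' True"
    if g': "g' \<in> {0<..<1}" for g'
  proof -
    obtain b0 b1 where b: "l g' False = ennreal b0" "l g' True = ennreal b1" "b0 \<ge> 0" "b1 \<ge> 0"
      using proper_loss_finite_interior[OF lf pr g']
      by (cases "l g' False"; cases "l g' True") auto
    have "p * exp (eta * (a1 - b1)) + (1 - p) * exp (eta * (a0 - b0)) \<le> 1"
      using mixable_proper_exp_mixture_le_1[OF pr mx _ _ a0 a1 b(1,2) nn b(3,4)] p g' by auto
    hence "(1 - p) * exp (eta * (a0 - b0)) \<le> 1" "p * exp (eta * (a1 - b1)) \<le> 1"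
      using pp by (smt (verit) exp_gt_zero mult_pos_pos)+
    hence "a0 + ln (1 - p) / eta \<le> b0" "a1 + ln p / eta \<le> b1"
      using pp eta by (simp_all add: mult_exp_le_1_iff)
    thus ?thesis by (simp add: b ennreal_leI)
  qed
  have cont: "continuous_on {0..1} (\<lambda>g. l g False)" "continuous_on {0..1} (\<lambda>g. l g True)"
    using lf by (auto simp: loss_function_def)
  show "ennreal (a0 + ln (1 - p) / eta) \<le> l g False"
    by (rule continuous_on_closed_interval_ge[OF cont(1) _ g]) (use interior in auto)
  show "ennreal (a1 + ln p / eta) \<le> l g True"
    by (rule continuous_on_closed_interval_ge[OF cont(2) _ g]) (use interior in auto)
qed

lemma dfactor_ennreal:
  "0 \<le> a \<Longrightarrow> 0 \<le> b \<Longrightarrow> dfactor eta (ennreal a) (ennreal b) = ennreal (exp (eta * (a - b)))"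
  by (simp add: dfactor_def)

lemma dfactor_top_right: "a \<noteq> top \<Longrightarrow> dfactor eta a top = 0"
  by (simp add: dfactor_def)

lemma dfactor_le_1:
  assumes "a \<le> b" "a < \<infinity>" "eta > 0"
  shows "dfactor eta a b \<le> 1"
proof (cases "b = \<infinity>")
  case False
  hence "enn2real a \<le> enn2real b" using assms by (intro enn2real_mono) (auto simp: top.not_eq_extremum)
  hence "exp (eta * (enn2real a - enn2real b)) \<le> 1" using assms by (simp add: mult_nonneg_nonpos)
  thus ?thesis using False assms by (auto simp: dfactor_def)
qed (use assms in \<open>simp add: dfactor_def\<close>)

lemma dfactor_le_1_weighted:
  assumes "q > 0" "eta > 0" "0 \<le> a" "ennreal (a + ln q / eta) \<le> b" "b \<noteq> \<infinity>"
  shows "ennreal q * dfactor eta (ennreal a) b \<le> 1"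
proof -
  obtain c where c: "b = ennreal c" "c \<ge> 0" using assms(5) by (cases b) auto
  have "a + ln q / eta \<le> c" using assms(4) c by (smt (verit) ennreal_le_iff ennreal_neg)
  hence "q * exp (eta * (a - c)) \<le> 1" using assms(1,2) by (simp add: mult_exp_le_1_iff)
  thus ?thesis using assms c by (simp add: dfactor_ennreal ennreal_mult[symmetric] ennreal_leI)
qed

lemma mixable_proper_dfactor_mixture_interior:
  fixes l :: loss
  assumes lf: "loss_function l" and pr: "proper_loss l" and mx: "mixable eta l"
    and p: "p \<in> {0<..<1}" and g: "g \<in> {0..1}"
  shows "ennreal p * dfactor eta (l p True) (l g True)
           + ennreal (1 - p) * dfactor eta (l p False) (l g False) \<le> 1"
proof -
  have eta: "eta > 0" and pp: "0 < p" "0 < 1 - p" using mx p by (auto simp: mixable_def)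
  obtain a0 a1 where a: "l p False = ennreal a0" "l p True = ennreal a1" "a0 \<ge> 0" "a1 \<ge> 0"
    using proper_loss_finite_interior[OF lf pr p] by (cases "l p False"; cases "l p True") auto
  note bound = mixable_proper_loss_lower_bound[OF lf pr mx p a g]
  have not_both: "\<not> (l g False = \<infinity> \<and> l g True = \<infinity>)" using lf g by (auto simp: loss_function_def)
  consider "l g True = \<infinity>" | "l g False = \<infinity>" | "l g False \<noteq> \<infinity>" "l g True \<noteq> \<infinity>" by blast
  then show ?thesis
  proof cases
    case 1
    thus ?thesis
      using not_both a dfactor_le_1_weighted[OF pp(2) eta a(3) bound(1)] by (simp add: dfactor_top_right)
  next
    case 2
    thus ?thesis
      using not_both a dfactor_le_1_weighted[OF pp(1) eta a(4) bound(2)] by (simp add: dfactor_top_right)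
  next
    case 3
    then obtain b0 b1 where b: "l g False = ennreal b0" "l g True = ennreal b1" "b0 \<ge> 0" "b1 \<ge> 0"
      by (cases "l g False"; cases "l g True") auto
    have "ennreal p * dfactor eta (l p True) (l g True)
            + ennreal (1 - p) * dfactor eta (l p False) (l g False)
          = ennreal (p * exp (eta * (a1 - b1)) + (1 - p) * exp (eta * (a0 - b0)))"
      using a b pp by (simp add: dfactor_ennreal ennreal_mult ennreal_plus)
    also have "\<dots> \<le> 1"
      unfolding ennreal_le_1 using p
      by (intro mixable_proper_exp_mixture_le_1[OF pr mx _ g a(1,2) b(1,2) a(3,4) b(3,4)]) auto
    finally show ?thesis .
  qed
qed

lemma mixable_proper_dfactor_mixture:
  fixes l :: loss
  assumes lf: "loss_function l" and pr: "proper_loss l" and mx: "mixable eta l"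
    and p: "p \<in> {0..1}" and g: "g \<in> {0..1}"
  shows "ennreal p * dfactor eta (l p True) (l g True)
           + ennreal (1 - p) * dfactor eta (l p False) (l g False) \<le> 1"
proof -
  have eta: "eta > 0" using mx by (simp add: mixable_def)
  obtain g' where g': "g' \<in> {0..1}" "l g' False < \<infinity>" "l g' True < \<infinity>"
    using lf by (rule loss_function_finite_point)
  consider "p = 0" | "p = 1" | "p \<in> {0<..<1}" using p by fastforce
  then show ?thesis
  proof cases
    case 1
    have "l 0 False < \<infinity>" using proper_loss_min_at_0[OF pr g'(1)] g' by order
    thus ?thesis using 1 proper_loss_min_at_0[OF pr g] eta by (simp add: dfactor_le_1)
  next
    case 2
    have "l 1 True < \<infinity>" using proper_loss_min_at_1[OF pr g'(1)] g' by order
    thus ?thesis using 2 proper_loss_min_at_1[OF pr g] eta by (simp add: dfactor_le_1)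
  qed (rule mixable_proper_dfactor_mixture_interior[OF lf pr mx _ g])
qed

lemma dfactor_prod_le_imp_sum_le:
  assumes eta: "eta > 0" and K: "K \<ge> 1" and fin: "finite A"
    and P: "(\<Prod>s\<in>A. dfactor eta (a s) (b s)) \<le> ennreal K"
  shows "(\<Sum>s\<in>A. a s) \<le> (\<Sum>s\<in>A. b s) + ennreal (ln K / eta)"
proof (cases "\<exists>s\<in>A. b s = \<infinity>")
  case True
  hence "(\<Sum>s\<in>A. b s) = \<infinity>" using fin by (simp add: ennreal_sum_eq_top)
  thus ?thesis by simp
next
  case b_fin: False
  show ?thesis
  proof (cases "\<exists>s\<in>A. a s = \<infinity>")
    case True
    have "(\<Prod>s\<in>A. dfactor eta (a s) (b s)) = top"
      unfolding ennreal_prod_eq_top using fin True b_fin by (auto simp: dfactor_def)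
    thus ?thesis using P by (simp add: top_unique)
  next
    case False
    define ra rb where "ra s = enn2real (a s)" and "rb s = enn2real (b s)" for s
    have ab: "a s = ennreal (ra s)" "b s = ennreal (rb s)" if "s \<in> A" for s
      using False b_fin that by (simp_all add: ra_def rb_def top.not_eq_extremum)
    have nn: "ra s \<ge> 0" "rb s \<ge> 0" for s by (auto simp: ra_def rb_def)
    have "(\<Prod>s\<in>A. dfactor eta (a s) (b s)) = ennreal (exp (\<Sum>s\<in>A. eta * (ra s - rb s)))"
      by (simp add: ab nn dfactor_ennreal prod_ennreal exp_sum fin cong: prod.cong)
    hence "exp (\<Sum>s\<in>A. eta * (ra s - rb s)) \<le> K" using P K by simp
    hence "(\<Sum>s\<in>A. eta * (ra s - rb s)) \<le> ln K"
      using K by (metis exp_le_cancel_iff exp_ln less_le_trans zero_less_one)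
    hence le: "(\<Sum>s\<in>A. ra s) \<le> (\<Sum>s\<in>A. rb s) + ln K / eta"
      using eta by (simp add: sum_distrib_left[symmetric] sum_subtractf field_simps)
    have "(\<Sum>s\<in>A. a s) = ennreal (\<Sum>s\<in>A. ra s)"
      by (simp add: ab nn sum_ennreal)
    also have "\<dots> \<le> ennreal ((\<Sum>s\<in>A. rb s) + ln K / eta)" using le by (rule ennreal_leI)
    also have "\<dots> = (\<Sum>s\<in>A. b s) + ennreal (ln K / eta)"
      using K eta by (simp add: ab nn sum_ennreal ennreal_plus sum_nonneg)
    finally show ?thesis .
  qed
qed

section \<open>Defensive forecasting keeps \<open>Q\<close> from growing\<close>

lemma ediff_le_0_iff: "b \<noteq> \<infinity> \<Longrightarrow> ediff a b \<le> 0 \<longleftrightarrow> a \<le> b"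
  by (cases a; cases b) (auto simp: ediff_def ennreal_neg top_unique)

lemma ediff_cancel_right: "b \<noteq> \<infinity> \<Longrightarrow> ediff a b = ediff c b \<Longrightarrow> a = c"
  by (cases a; cases b; cases c) (auto simp: ediff_def ennreal_neg)

lemma defensive_choice_le:
  fixes G :: "real \<Rightarrow> bool \<Rightarrow> ennreal"
  assumes Q: "Q \<noteq> \<infinity>"
    and mixture: "\<And>p. p \<in> {0..1} \<Longrightarrow> ennreal p * G p True + ennreal (1 - p) * G p False \<le> Q"
    and p: "p \<in> {0..1}"
    and choice: "if ediff (G 0 True) Q \<le> 0 then p = 0
                 else if ediff (G 1 False) Q \<le> 0 then p = 1
                 else ediff (G p False) Q = ediff (G p True) Q"
  shows "G p w \<le> Q"
proof -
  have "G p True \<le> Q \<and> G p False \<le> Q"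
  proof (cases "G 0 True \<le> Q")
    case True
    thus ?thesis using choice mixture[of 0] by (simp add: ediff_le_0_iff[OF Q])
  next
    case not0: False
    show ?thesis
    proof (cases "G 1 False \<le> Q")
      case True
      thus ?thesis using not0 choice mixture[of 1] by (simp add: ediff_le_0_iff[OF Q])
    next
      case False
      hence eq: "G p False = G p True"
        using not0 choice by (auto simp: ediff_le_0_iff[OF Q] intro: ediff_cancel_right[OF Q])
      have "ennreal p + ennreal (1 - p) = 1"
        using p by (simp add: ennreal_plus[symmetric] del: ennreal_plus)
      hence "G p True = ennreal p * G p True + ennreal (1 - p) * G p False"
        by (metis eq distrib_right mult_1)
      thus ?thesis using mixture[OF p] eq by simp
    qed
  qed
  thus ?thesis by (cases w) auto
qed

lemma Qnm_step:
  "Qnm lam eta gam (prd(Suc t := p)) (om(Suc t := w)) (Suc t) n m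
     = Qnm lam eta gam prd om t n m * dfactor (eta m) (lam m p w) (lam m (gam (Suc t) n) w)"
proof -
  have "(\<Prod>s\<in>{1..t}. dfactor (eta m) (lam m ((prd(Suc t := p)) s) ((om(Suc t := w)) s))
                                 (lam m (gam s n) ((om(Suc t := w)) s)))
      = (\<Prod>s\<in>{1..t}. dfactor (eta m) (lam m (prd s) (om s)) (lam m (gam s n) (om s)))"
    by (rule prod.cong) auto
  thus ?thesis unfolding Qnm_def by (simp add: mult.commute)
qed

lemma Qt_mixture_le:
  assumes losses: "\<forall>m\<in>{1..M}. loss_function (lam m) \<and> proper_loss (lam m) \<and> mixable (eta m) (lam m)"
    and experts: "\<forall>n\<in>{1..N}. gam (Suc t) n \<in> {0..1}"
    and p: "p \<in> {0..1}"
  shows "ennreal p * Qt M N lam eta gam (prd(Suc t := p)) (om(Suc t := True)) (Suc t)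
           + ennreal (1 - p) * Qt M N lam eta gam (prd(Suc t := p)) (om(Suc t := False)) (Suc t)
         \<le> Qt M N lam eta gam prd om t"
proof -
  define q where "q x = (case x of (n, m) \<Rightarrow> Qnm lam eta gam prd om t n m)" for x
  define d where "d w x = (case x of (n, m) \<Rightarrow>
    dfactor (eta m) (lam m p w) (lam m (gam (Suc t) n) w))" for w x
  have d_mix: "ennreal p * d True x + ennreal (1 - p) * d False x \<le> 1"
    if "x \<in> {1..N} \<times> {1..M}" for x
    using that losses experts p
    by (auto simp: d_def intro!: mixable_proper_dfactor_mixture split: prod.split)
  have sum_le: "(\<Sum>x\<in>{1..N} \<times> {1..M}.
                   ennreal p * (q x * d True x) + ennreal (1 - p) * (q x * d False x))
                \<le> (\<Sum>x\<in>{1..N} \<times> {1..M}. q x)"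
  proof (rule sum_mono)
    fix x assume x: "x \<in> {1..N} \<times> {1..M}"
    have "ennreal p * (q x * d True x) + ennreal (1 - p) * (q x * d False x)
            = q x * (ennreal p * d True x + ennreal (1 - p) * d False x)"
      by (simp add: distrib_left mult.left_commute)
    also have "\<dots> \<le> q x" using mult_left_mono[OF d_mix[OF x], of "q x"] by simp
    finally show "ennreal p * (q x * d True x) + ennreal (1 - p) * (q x * d False x) \<le> q x" .
  qed
  define c where "c = ennreal (1 / (real M * real N))"
  have "ennreal p * Qt M N lam eta gam (prd(Suc t := p)) (om(Suc t := True)) (Suc t)
          + ennreal (1 - p) * Qt M N lam eta gam (prd(Suc t := p)) (om(Suc t := False)) (Suc t)
        = c * (\<Sum>x\<in>{1..N} \<times> {1..M}.
                 ennreal p * (q x * d True x) + ennreal (1 - p) * (q x * d False x))"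
    unfolding Qt_def Qnm_step c_def q_def d_def
    by (simp add: split_def sum.distrib sum_distrib_left distrib_left mult.left_commute)
  also have "\<dots> \<le> c * (\<Sum>x\<in>{1..N} \<times> {1..M}. q x)"
    using sum_le by (rule mult_left_mono) simp
  also have "\<dots> = Qt M N lam eta gam prd om t"
    unfolding Qt_def c_def q_def by (simp add: split_def)
  finally show ?thesis .
qed

lemma Qt_le_1:
  assumes losses: "\<forall>m\<in>{1..M}. loss_function (lam m) \<and> proper_loss (lam m) \<and> mixable (eta m) (lam m)"
    and experts: "\<forall>t\<ge>1. \<forall>n\<in>{1..N}. gam t n \<in> {0..1}"
    and learner: "follows_DF M N lam eta gam prd om"
    and MN: "M \<ge> 1" "N \<ge> 1"
  shows "Qt M N lam eta gam prd om t \<le> 1"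
proof (induction t)
  case 0
  have "Qt M N lam eta gam prd om 0 = ennreal (1 / (real M * real N)) * of_nat (N * M)"
    by (simp add: Qt_def Qnm_def)
  also have "\<dots> = 1"
    using MN by (simp add: ennreal_of_nat_eq_real_of_nat ennreal_mult[symmetric])
  finally show ?case by simp
next
  case (Suc t)
  define G where "G p w = Qt M N lam eta gam (prd(Suc t := p)) (om(Suc t := w)) (Suc t)" for p w
  have choice: "prd (Suc t) \<in> {0..1} \<and>
     (if ediff (G 0 True) (Qt M N lam eta gam prd om t) \<le> 0 then prd (Suc t) = 0
      else if ediff (G 1 False) (Qt M N lam eta gam prd om t) \<le> 0 then prd (Suc t) = 1
      else ediff (G (prd (Suc t)) False) (Qt M N lam eta gam prd om t)
             = ediff (G (prd (Suc t)) True) (Qt M N lam eta gam prd om t))"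
    using learner unfolding follows_DF_def Let_def ft_def G_def
    by (drule_tac spec[of _ "Suc t"]) (simp del: fun_upd_triv cong: if_cong)
  have "G (prd (Suc t)) (om (Suc t)) \<le> Qt M N lam eta gam prd om t"
  proof (rule defensive_choice_le)
    show "Qt M N lam eta gam prd om t \<noteq> \<infinity>" using Suc.IH by (auto simp: top_unique)
    show "ennreal p * G p True + ennreal (1 - p) * G p False \<le> Qt M N lam eta gam prd om t"
      if "p \<in> {0..1}" for p
      unfolding G_def using losses experts that by (intro Qt_mixture_le) auto
  qed (use choice in auto)
  thus ?case using Suc.IH by (simp add: G_def)
qed

lemma Qnm_le_of_Qt_le_1:
  assumes Q: "Qt M N lam eta gam prd om t \<le> 1" and n: "n \<in> {1..N}" and m: "m \<in> {1..M}"
  shows "Qnm lam eta gam prd om t n m \<le> ennreal (real M * real N)"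
proof -
  define c where "c = ennreal (real M * real N)"
  have c: "c * ennreal (1 / (real M * real N)) = 1"
    using n m by (simp add: c_def ennreal_mult[symmetric])
  have "Qnm lam eta gam prd om t n m \<le> (\<Sum>(n, m)\<in>{1..N} \<times> {1..M}. Qnm lam eta gam prd om t n m)"
    using member_le_sum[of "(n, m)" "{1..N} \<times> {1..M}" "\<lambda>(n, m). Qnm lam eta gam prd om t n m"] n m
    by simp
  also have "\<dots> = c * Qt M N lam eta gam prd om t"
    unfolding Qt_def by (simp add: mult.assoc[symmetric] c)
  also have "\<dots> \<le> c" using mult_left_mono[OF Q, of c] by simp
  finally show ?thesis unfolding c_def .
qed

theorem corollary3:
  fixes M N :: nat
    and lam :: "nat \<Rightarrow> loss" and eta :: "nat \<Rightarrow> real"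
    and gam :: "nat \<Rightarrow> nat \<Rightarrow> real" and prd :: "nat \<Rightarrow> real" and om :: "nat \<Rightarrow> bool"
  assumes losses: "\<forall>m\<in>{1..M}. loss_function (lam m) \<and> proper_loss (lam m)
                        \<and> eta m > 0 \<and> mixable (eta m) (lam m)"
    and experts: "\<forall>t\<ge>1. \<forall>n\<in>{1..N}. gam t n \<in> {0..1}"
    and learner: "follows_DF M N lam eta gam prd om"
  shows "\<forall>t n m. n \<in> {1..N} \<longrightarrow> m \<in> {1..M} \<longrightarrow>
           (\<Sum>s\<in>{1..t}. lam m (prd s) (om s))
             \<le> (\<Sum>s\<in>{1..t}. lam m (gam s n) (om s)) + ennreal (ln (real M * real N) / eta m)"
proof (intro allI impI)
  fix t n m assume n: "n \<in> {1..N}" and m: "m \<in> {1..M}"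
  have "Qt M N lam eta gam prd om t \<le> 1"
    using losses experts learner n m by (intro Qt_le_1) auto
  hence "Qnm lam eta gam prd om t n m \<le> ennreal (real M * real N)"
    using n m by (rule Qnm_le_of_Qt_le_1)
  moreover have "real M * real N \<ge> 1" using n m by (simp add: mult_ge1_I)
  ultimately show "(\<Sum>s\<in>{1..t}. lam m (prd s) (om s))
             \<le> (\<Sum>s\<in>{1..t}. lam m (gam s n) (om s)) + ennreal (ln (real M * real N) / eta m)"
    using losses m by (intro dfactor_prod_le_imp_sum_le) (auto simp: Qnm_def)
qed

end
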